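(* For all integers $n\ge1$ and $k\ge0$, the generalized cosecant numbers satisfy $$c_{2n+2,k+1}=\frac{(2k+2-2n)(2k+1-2n)}{2n(2n+1)}\,c_{2n,k+1}+\frac{2n}{2n+1}\,c_{2n,k}.$$
   Context: The generalized cosecant numbers $c_{\rho,k}$ are defined as the coefficients of the power series $\left(\frac{x}{\sin x}\right)^{\rho}=\sum_{k\ge0}c_{\rho,k}\,x^{2k}$ (for $|x|<\pi$). *)

theory Defs
  imports "HOL-Analysis.Analysis"
begin

text \<open>Generalized cosecant numbers: c rho k is the coefficient of x^(2k) in the
  power series expansion of (x / sin x) powr rho, valid for 0 < |x| < pi
  (at x = 0 the function is 1 by continuity, which is the constant coefficient).\<close>

definition cosec_num :: "real \<Rightarrow> nat \<Rightarrow> real" where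
  "cosec_num \<rho> = (THE c. \<forall>x::real. 0 < \<bar>x\<bar> \<and> \<bar>x\<bar> < pi \<longrightarrow>
      (\<lambda>k. c k * x ^ (2 * k)) sums ((x / sin x) powr \<rho>))"

end

theory Submission
  imports Defs "HOL-Complex_Analysis.Complex_Analysis"
begin

text \<open>The function f_m(x) = (x / sin x)^m extends holomorphically to the disc |z| < pi, so it
  is given there by a power series, which is even because f_m is. Writing f_m = x^m csc^m x, two
  differentiations show that f_m satisfies the linear ODE
    x^2 f_m'' - 2 m x f_m' + (m (m + 1) + m^2 x^2) f_m = m (m + 1) f_(m+2).
  Comparing the coefficients c_m(j) of x^j on both sides gives
    m (m + 1) c_(m+2)(j) = (j - m) (j - m - 1) c_m(j) + m^2 c_m(j - 2),
  and the theorem is the case m = 2n, j = 2k + 2.\<close>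

lemma real_powser_eq_0_at_right:
  fixes a :: "nat \<Rightarrow> real"
  assumes "R > 0" and sums0: "\<And>x. 0 < x \<Longrightarrow> x < R \<Longrightarrow> (\<lambda>n. a n * x^n) sums 0"
  shows "a j = 0"
proof (induction j rule: less_induct)
  case (less j)
  define g where "g x = (\<Sum>n. a (n + j) * x^n)" for x :: real
  have g_sums: "(\<lambda>n. a (n + j) * x^n) sums 0" if "0 < x" "x < R" for x
  proof -
    have "(\<lambda>n. a (n + j) * x^(n + j)) sums 0"
      using sums_zero_iff_shift[of j "\<lambda>n. a n * x^n"] less sums0[OF that] by simp
    then have "(\<lambda>n. x^j * (a (n + j) * x^n)) sums 0"
      by (simp add: power_add algebra_simps)
    from sums_mult_D[OF this] that show ?thesis
      by simp
  qed
  have "isCont g 0"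
    unfolding g_def
    by (rule isCont_powser[where K = "R/2"]) (use g_sums[of "R/2"] \<open>R > 0\<close> sums_summable in auto)
  then have "(g \<longlongrightarrow> g 0) (at_right 0)"
    by (simp add: isCont_def filterlim_at_split)
  moreover have "eventually (\<lambda>x. g x = 0) (at_right 0)"
    unfolding eventually_at_right_field using \<open>R > 0\<close>
    by (intro exI[of _ R]) (auto simp: g_def intro!: sums_unique[symmetric] g_sums)
  then have "(g \<longlongrightarrow> 0) (at_right 0)"
    by (rule tendsto_eventually)
  ultimately have "g 0 = 0"
    using tendsto_unique[OF trivial_limit_at_right_real] by blast
  then show ?case by (simp add: g_def)
qed

lemma real_powser_unique_at_right:
  fixes a b :: "nat \<Rightarrow> real"
  assumes "R > 0"
    and "\<And>x. 0 < x \<Longrightarrow> x < R \<Longrightarrow> (\<lambda>n. a n * x^n) sums f x"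
    and "\<And>x. 0 < x \<Longrightarrow> x < R \<Longrightarrow> (\<lambda>n. b n * x^n) sums f x"
  shows "a = b"
proof
  fix j
  have "a j - b j = 0"
  proof (rule real_powser_eq_0_at_right[OF \<open>R > 0\<close>, of "\<lambda>n. a n - b n"])
    fix x :: real
    assume "0 < x" "x < R"
    from sums_diff[OF assms(2,3)[OF this]] show "(\<lambda>n. (a n - b n) * x^n) sums 0"
      by (simp add: algebra_simps)
  qed
  then show "a j = b j" by simp
qed

lemma real_powser_of_holomorphic:
  assumes "F holomorphic_on ball 0 R"
  shows "\<exists>a. \<forall>x::real. \<bar>x\<bar> < R \<longrightarrow> (\<lambda>n. a n * x^n) sums Re (F (of_real x))"
proof (intro exI allI impI)
  fix x :: real
  assume "\<bar>x\<bar> < R"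
  then have "(\<lambda>n. (deriv ^^ n) F 0 / fact n * (of_real x - 0)^n) sums F (of_real x)"
    by (intro holomorphic_power_series[OF assms]) auto
  then have "(\<lambda>n. Re ((deriv ^^ n) F 0 / fact n * of_real (x^n))) sums Re (F (of_real x))"
    by (intro sums_Re) (simp only: diff_zero of_real_power)
  moreover have "Re (c * of_real y) = Re c * y" for c y
    by simp
  ultimately show "(\<lambda>n. Re ((deriv ^^ n) F 0 / fact n) * x^n) sums Re (F (of_real x))"
    by (simp only:)
qed

lemma powser_sums_times_derivatives:
  fixes a :: "nat \<Rightarrow> real"
  assumes summable: "\<And>y. \<bar>y\<bar> < R \<Longrightarrow> summable (\<lambda>n. a n * y^n)"
    and "open S" and S_ball: "\<And>y. y \<in> S \<Longrightarrow> \<bar>y\<bar> < R"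
    and sums: "\<And>y. y \<in> S \<Longrightarrow> (\<lambda>n. a n * y^n) sums f y"
    and f': "\<And>y. y \<in> S \<Longrightarrow> (f has_real_derivative f' y) (at y)"
    and f'': "\<And>y. y \<in> S \<Longrightarrow> (f' has_real_derivative f'' y) (at y)"
    and "x \<in> S"
  shows "(\<lambda>n. real n * a n * x^n) sums (x * f' x)"
    and "(\<lambda>n. real n * (real n - 1) * a n * x^n) sums (x^2 * f'' x)"
proof -
  define G where "G y = (\<Sum>n. a n * y^n)" for y :: real
  define G' where "G' y = (\<Sum>n. diffs a n * y^n)" for y :: real
  define G'' where "G'' y = (\<Sum>n. diffs (diffs a) n * y^n)" for y :: real
  have summable': "summable (\<lambda>n. diffs a n * y^n)" if "\<bar>y\<bar> < R" for y
    using termdiff_converges[of y R a] summable that by auto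
  have summable'': "summable (\<lambda>n. diffs (diffs a) n * y^n)" if "\<bar>y\<bar> < R" for y
    using termdiff_converges[of y R "diffs a"] summable' that by auto
  have G': "(G has_real_derivative G' y) (at y)" if "\<bar>y\<bar> < R" for y
    unfolding G_def G'_def by (rule termdiffs_strong') (use summable that in auto)
  have G'': "(G' has_real_derivative G'' y) (at y)" if "\<bar>y\<bar> < R" for y
    unfolding G'_def G''_def by (rule termdiffs_strong') (use summable' that in auto)
  have f'_eq: "f' y = G' y" if "y \<in> S" for y
  proof (rule DERIV_unique[OF f'[OF that]])
    show "(f has_real_derivative G' y) (at y)"
      by (rule has_field_derivative_transform_within_open[OF G'[OF S_ball[OF that]] \<open>open S\<close> that])
        (simp add: G_def sums_unique[OF sums])
  qed
  have f''_eq: "f'' y = G'' y" if "y \<in> S" for y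
  proof (rule DERIV_unique[OF f''[OF that]])
    show "(f' has_real_derivative G'' y) (at y)"
      by (rule has_field_derivative_transform_within_open[OF G''[OF S_ball[OF that]] \<open>open S\<close> that])
        (use f'_eq in auto)
  qed
  have "(\<lambda>n. x * (diffs a n * x^n)) sums (x * f' x)"
    using sums_mult[OF summable_sums[OF summable'[OF S_ball[OF \<open>x \<in> S\<close>]]], of x]
    by (simp add: G'_def f'_eq[OF \<open>x \<in> S\<close>])
  then have "(\<lambda>n. real (n + 1) * a (n + 1) * x^(n + 1)) sums (x * f' x)"
    by (simp add: diffs_def algebra_simps)
  then show "(\<lambda>n. real n * a n * x^n) sums (x * f' x)"
    by (subst (asm) sums_zero_iff_shift) auto
  have "(\<lambda>n. x^2 * (diffs (diffs a) n * x^n)) sums (x^2 * f'' x)"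
    using sums_mult[OF summable_sums[OF summable''[OF S_ball[OF \<open>x \<in> S\<close>]]], of "x^2"]
    by (simp add: G''_def f''_eq[OF \<open>x \<in> S\<close>])
  then have "(\<lambda>n. real (n + 2) * (real (n + 2) - 1) * a (n + 2) * x^(n + 2)) sums (x^2 * f'' x)"
    by (simp add: diffs_def algebra_simps power2_eq_square)
  then show "(\<lambda>n. real n * (real n - 1) * a n * x^n) sums (x^2 * f'' x)"
    by (subst (asm) sums_zero_iff_shift) (auto simp: less_2_cases_iff)
qed

lemma powser_sums_times_power:
  fixes a :: "nat \<Rightarrow> real"
  assumes "(\<lambda>n. a n * x^n) sums s"
  shows "(\<lambda>n. (if k \<le> n then a (n - k) else 0) * x^n) sums (x^k * s)"
proof -
  have "(\<lambda>n. (if k \<le> n + k then a (n + k - k) else 0) * x^(n + k)) sums (x^k * s)"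
    using sums_mult[OF assms, of "x^k"] by (simp add: power_add algebra_simps)
  then show ?thesis
    by (subst (asm) sums_zero_iff_shift) auto
qed

lemma sums_even_index_iff:
  assumes "\<And>n. odd n \<Longrightarrow> f n = 0"
  shows "(\<lambda>k. f (2 * k)) sums s \<longleftrightarrow> f sums s"
proof -
  have "strict_mono (\<lambda>k::nat. 2 * k)"
    by (auto simp: strict_mono_def)
  moreover have "f n = 0" if "n \<notin> range (\<lambda>k. 2 * k)" for n
    using that assms[of n] by (auto elim: evenE)
  ultimately show ?thesis
    using sums_mono_reindex[of "\<lambda>k. 2 * k" f] by (simp add: comp_def)
qed

lemma sin_nonzero_in_ball:
  fixes z :: complex
  assumes "norm z < pi" "z \<noteq> 0"
  shows "sin z \<noteq> 0"
proof
  assume "sin z = 0"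
  then obtain n :: int where n: "z = of_real (n * pi)"
    by (auto simp: sin_eq_0)
  with assms(1) have "\<bar>real_of_int n\<bar> * pi < pi"
    by (simp add: norm_mult)
  then have "n = 0"
    by simp
  with n assms(2) show False
    by simp
qed

lemma x_over_sin_pos:
  fixes x :: real
  assumes "0 < \<bar>x\<bar>" "\<bar>x\<bar> < pi"
  shows "x / sin x > 0"
proof -
  have "sin \<bar>x\<bar> > 0"
    using assms by (intro sin_gt_zero) auto
  then show ?thesis
    using assms by (cases "x > 0") (auto simp: divide_neg_neg)
qed

lemma has_real_derivative_inverse_sin_power:
  assumes "sin x \<noteq> 0"
  shows "((\<lambda>x. inverse (sin x) ^ m) has_real_derivative
           - real m * cos x * inverse (sin x) ^ (m + 1)) (at x)"
proof -
  have "((\<lambda>x. inverse (sin x)) has_real_derivative - cos x * inverse (sin x) ^ 2) (at x)"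
    using assms by (auto intro!: derivative_eq_intros simp: power2_eq_square)
  from DERIV_power[OF this, of m] show ?thesis
    by (cases m) (simp_all add: power2_eq_square algebra_simps)
qed

lemma has_real_derivative_cos_inverse_sin_power:
  assumes "sin x \<noteq> 0"
  shows "((\<lambda>x. cos x * inverse (sin x) ^ (m + 1)) has_real_derivative
           real m * inverse (sin x) ^ m - real (m + 1) * inverse (sin x) ^ (m + 2)) (at x)"
proof -
  define u where "u = inverse (sin x)"
  have su: "sin x * u = 1"
    using assms by (simp add: u_def)
  have "- sin x * u ^ (m + 1) + cos x * (- real (m + 1) * cos x * u ^ (m + 2))
      = - (sin x * u) * u ^ m - real (m + 1) * (cos x)\<^sup>2 * u ^ (m + 2)"
    by (simp add: algebra_simps power2_eq_square)
  also have "\<dots> = - (sin x * u) * u ^ m - real (m + 1) * u ^ (m + 2)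
      + real (m + 1) * (sin x * u)\<^sup>2 * u ^ m"
    unfolding cos_squared_eq by (simp add: algebra_simps power2_eq_square)
  also have "\<dots> = real m * u ^ m - real (m + 1) * u ^ (m + 2)"
    unfolding su by (simp add: algebra_simps)
  finally show ?thesis
    using DERIV_mult[OF DERIV_cos has_real_derivative_inverse_sin_power[OF assms, of "m + 1"]]
    by (simp add: u_def algebra_simps)
qed

lemma x_over_sin_power_ode:
  fixes m :: nat
  assumes "2 \<le> m"
  obtains f' f'' :: "real \<Rightarrow> real" where
    "\<And>x. sin x \<noteq> 0 \<Longrightarrow> ((\<lambda>x. (x / sin x) ^ m) has_real_derivative f' x) (at x)"
    "\<And>x. sin x \<noteq> 0 \<Longrightarrow> (f' has_real_derivative f'' x) (at x)"
    "\<And>x. x^2 * f'' x - 2 * real m * (x * f' x) + real m * (real m + 1) * (x / sin x) ^ m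
        + (real m)^2 * (x^2 * (x / sin x) ^ m) = real m * (real m + 1) * (x / sin x) ^ (m + 2)"
proof -
  \<comment> \<open>With \<open>m = p + 2\<close> the powers of \<open>x\<close> in \<open>f'\<close> and \<open>f''\<close> need no truncated subtraction.\<close>
  obtain p where m: "m = p + 2"
    using assms le_Suc_ex by (metis add.commute)
  define M where "M = real m"
  define c where "c k x = inverse (sin x) ^ k" for k and x :: real
  define u where "u x = cos x * inverse (sin x) ^ (m + 1)" for x :: real
  define f' where "f' x = M * x^(p + 1) * c m x - M * x^(p + 2) * u x" for x :: real
  define f'' where "f'' x = M * (M - 1) * x^p * c m x - 2 * M^2 * x^(p + 1) * u x
      - M * x^(p + 2) * (M * c m x - (M + 1) * c (m + 2) x)" for x :: real
  have f: "(\<lambda>x. (x / sin x) ^ m) = (\<lambda>x. x^(p + 2) * c m x)"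
    by (simp only: c_def m divide_inverse power_mult_distrib)
  show ?thesis
  proof
    fix x :: real
    assume "sin x \<noteq> 0"
    show "((\<lambda>x. (x / sin x) ^ m) has_real_derivative f' x) (at x)"
      unfolding f c_def
      by (rule DERIV_cong[OF DERIV_mult[OF DERIV_pow has_real_derivative_inverse_sin_power]])
        (use \<open>sin x \<noteq> 0\<close> in \<open>simp_all add: f'_def c_def u_def M_def m algebra_simps\<close>)
    show "(f' has_real_derivative f'' x) (at x)"
      unfolding f'_def c_def u_def
      by (rule DERIV_cong[OF DERIV_diff[OF DERIV_mult[OF DERIV_cmult[OF DERIV_pow]
            has_real_derivative_inverse_sin_power] DERIV_mult[OF DERIV_cmult[OF DERIV_pow]
            has_real_derivative_cos_inverse_sin_power]]])
        (use \<open>sin x \<noteq> 0\<close> in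
          \<open>simp_all add: f''_def c_def u_def M_def m algebra_simps power2_eq_square\<close>)
  next
    fix x :: real
    show "x^2 * f'' x - 2 * real m * (x * f' x) + real m * (real m + 1) * (x / sin x) ^ m
        + (real m)^2 * (x^2 * (x / sin x) ^ m) = real m * (real m + 1) * (x / sin x) ^ (m + 2)"
      by (simp add: f'_def f''_def c_def M_def m divide_inverse power_mult_distrib power_add
          power2_eq_square algebra_simps)
  qed
qed

lemma x_over_sin_power_has_powser:
  "\<exists>a. \<forall>x::real. 0 < \<bar>x\<bar> \<and> \<bar>x\<bar> < pi \<longrightarrow> (\<lambda>n. a n * x^n) sums ((x / sin x)^m)"
proof -
  define F where "F z = (if z = 0 then 1 else (z / sin z)^m)" for z :: complex
  have sinc_lim: "((\<lambda>z::complex. sin z / z) \<longlongrightarrow> 1) (at 0)"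
    using DERIV_sin[of 0] by (simp add: has_field_derivative_iff)
  have "((\<lambda>z::complex. inverse (sin z / z) ^ m) \<longlongrightarrow> inverse 1 ^ m) (at 0)"
    by (intro tendsto_intros sinc_lim) simp
  then have "((\<lambda>z. inverse (sin z / z) ^ m) \<longlongrightarrow> F 0) (at 0)"
    by (simp add: F_def)
  then have F_lim: "(F \<longlongrightarrow> F 0) (at 0)"
    by (rule Lim_transform_eventually)
      (auto simp: F_def eventually_at_filter divide_inverse mult.commute)
  have "(\<lambda>z. (z / sin z)^m) holomorphic_on ball 0 pi - {0}"
    by (intro holomorphic_intros) (use sin_nonzero_in_ball in force)
  then have "F holomorphic_on ball 0 pi - {0}"
    by (rule holomorphic_transform) (auto simp: F_def)
  then have "F holomorphic_on ball 0 pi"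
    by (rule no_isolated_singularity'[rotated]) (use tendsto_within_subset[OF F_lim] in auto)
  from real_powser_of_holomorphic[OF this] obtain a where
    "\<bar>x\<bar> < pi \<Longrightarrow> (\<lambda>n. a n * x^n) sums Re (F (of_real x))" for x :: real
    by blast
  moreover have "Re (F (of_real x)) = (x / sin x)^m" if "x \<noteq> 0" for x :: real
    using that by (simp add: F_def sin_of_real flip: of_real_divide of_real_power)
  ultimately show ?thesis
    by (intro exI[of _ a]) force
qed

definition x_over_sin_coeff :: "nat \<Rightarrow> nat \<Rightarrow> real" where
  "x_over_sin_coeff m =
     (SOME a. \<forall>x::real. 0 < \<bar>x\<bar> \<and> \<bar>x\<bar> < pi \<longrightarrow> (\<lambda>n. a n * x^n) sums ((x / sin x)^m))"

lemma x_over_sin_coeff_sums: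
  assumes "0 < \<bar>x\<bar>" "\<bar>x\<bar> < pi"
  shows "(\<lambda>n. x_over_sin_coeff m n * x^n) sums ((x / sin x)^m)"
  using someI_ex[OF x_over_sin_power_has_powser[of m]] assms
  unfolding x_over_sin_coeff_def by blast

lemma x_over_sin_coeff_unique:
  assumes "\<And>x. 0 < x \<Longrightarrow> x < pi \<Longrightarrow> (\<lambda>n. a n * x^n) sums ((x / sin x)^m)"
  shows "a = x_over_sin_coeff m"
  by (rule real_powser_unique_at_right[OF pi_gt_zero]) (use assms x_over_sin_coeff_sums in auto)

lemma x_over_sin_coeff_odd:
  assumes "odd n"
  shows "x_over_sin_coeff m n = 0"
proof -
  have "(\<lambda>n. (-1)^n * x_over_sin_coeff m n) = x_over_sin_coeff m"
  proof (rule x_over_sin_coeff_unique)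
    fix x :: real
    assume "0 < x" "x < pi"
    then have "(\<lambda>n. x_over_sin_coeff m n * (-x)^n) sums ((-x / sin (-x))^m)"
      by (intro x_over_sin_coeff_sums) auto
    then show "(\<lambda>n. (-1)^n * x_over_sin_coeff m n * x^n) sums ((x / sin x)^m)"
      by (simp add: power_minus[of x] mult_ac)
  qed
  from fun_cong[OF this, of n] assms show ?thesis
    by simp
qed

lemma cosec_num_eq_x_over_sin_coeff:
  "cosec_num (real m) k = x_over_sin_coeff m (2 * k)"
proof -
  let ?P = "\<lambda>c. \<forall>x::real. 0 < \<bar>x\<bar> \<and> \<bar>x\<bar> < pi \<longrightarrow>
      (\<lambda>k. c k * x^(2 * k)) sums ((x / sin x) powr real m)"
  have powr_eq: "(x / sin x) powr real m = (x / sin x)^m" if "0 < \<bar>x\<bar>" "\<bar>x\<bar> < pi" for x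
    using x_over_sin_pos[OF that] by (simp add: powr_realpow)
  have even_sums_iff: "(\<lambda>k. a (2 * k) * x^(2 * k)) sums s \<longleftrightarrow> (\<lambda>n. a n * x^n) sums s"
    if "\<And>n. odd n \<Longrightarrow> a n = 0" for a and x s :: real
    by (rule sums_even_index_iff[of "\<lambda>n. a n * x^n"]) (simp add: that)
  have "?P (\<lambda>k. x_over_sin_coeff m (2 * k))"
    using x_over_sin_coeff_sums powr_eq even_sums_iff[of "x_over_sin_coeff m", OF x_over_sin_coeff_odd]
    by simp
  moreover have "c = (\<lambda>k. x_over_sin_coeff m (2 * k))" if "?P c" for c
  proof -
    define a where "a n = (if even n then c (n div 2) else 0)" for n
    have "a = x_over_sin_coeff m"
    proof (rule x_over_sin_coeff_unique)
      fix x :: real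
      assume "0 < x" "x < pi"
      with that powr_eq have "(\<lambda>k. a (2 * k) * x^(2 * k)) sums ((x / sin x)^m)"
        by (simp add: a_def)
      then show "(\<lambda>n. a n * x^n) sums ((x / sin x)^m)"
        using even_sums_iff[of a] by (simp add: a_def)
    qed
    then show ?thesis
      by (auto simp: a_def fun_eq_iff dest: spec[of _ "2 * _"])
  qed
  ultimately have "cosec_num (real m) = (\<lambda>k. x_over_sin_coeff m (2 * k))"
    unfolding cosec_num_def by (rule the_equality)
  then show ?thesis
    by simp
qed

lemma x_over_sin_coeff_recurrence:
  assumes "2 \<le> m" "2 \<le> j"
  shows "real m * (real m + 1) * x_over_sin_coeff (m + 2) j
    = (real j - real m) * (real j - real m - 1) * x_over_sin_coeff m j
      + (real m)^2 * x_over_sin_coeff m (j - 2)"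
proof -
  define M where "M = real m"
  define a where "a = x_over_sin_coeff m"
  obtain f' f'' where
    f': "\<And>x. sin x \<noteq> 0 \<Longrightarrow> ((\<lambda>x. (x / sin x) ^ m) has_real_derivative f' x) (at x)"
    and f'': "\<And>x. sin x \<noteq> 0 \<Longrightarrow> (f' has_real_derivative f'' x) (at x)"
    and ode: "\<And>x. x^2 * f'' x - 2 * M * (x * f' x) + M * (M + 1) * (x / sin x) ^ m
        + M^2 * (x^2 * (x / sin x) ^ m) = M * (M + 1) * (x / sin x) ^ (m + 2)"
    using x_over_sin_power_ode[OF \<open>2 \<le> m\<close>] unfolding M_def by blast
  define b where "b n = (real n * (real n - 1) - 2 * M * real n + M * (M + 1)) * a n
      + M^2 * (if 2 \<le> n then a (n - 2) else 0)" for n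
  have "b = (\<lambda>n. M * (M + 1) * x_over_sin_coeff (m + 2) n)"
  proof (rule real_powser_unique_at_right[OF pi_gt_zero])
    fix x :: real
    assume x: "0 < x" "x < pi"
    have sums: "(\<lambda>n. a n * y^n) sums (y / sin y) ^ m" if "y \<in> {0<..<pi}" for y
      using that x_over_sin_coeff_sums by (simp add: a_def)
    have summable: "summable (\<lambda>n. a n * y^n)" if "\<bar>y\<bar> < pi" for y
      using that x_over_sin_coeff_sums[of y m] sums_summable by (cases "y = 0") (auto simp: a_def)
    have sin_nz: "sin y \<noteq> 0" if "y \<in> {0<..<pi}" for y
      using that sin_gt_zero[of y] by auto
    note derivs = powser_sums_times_derivatives[OF summable open_greaterThanLessThan _ sums
        f'[OF sin_nz] f''[OF sin_nz]]
    have "(\<lambda>n. real n * (real n - 1) * a n * x^n - 2 * M * (real n * a n * x^n)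
        + M * (M + 1) * (a n * x^n) + M^2 * ((if 2 \<le> n then a (n - 2) else 0) * x^n))
        sums (x^2 * f'' x - 2 * M * (x * f' x) + M * (M + 1) * (x / sin x) ^ m
          + M^2 * (x^2 * (x / sin x) ^ m))"
      using x by (intro sums_add sums_diff sums_mult derivs sums powser_sums_times_power) auto
    moreover have "b n * x^n = real n * (real n - 1) * a n * x^n - 2 * M * (real n * a n * x^n)
        + M * (M + 1) * (a n * x^n) + M^2 * ((if 2 \<le> n then a (n - 2) else 0) * x^n)" for n
      by (simp add: b_def algebra_simps)
    ultimately show "(\<lambda>n. b n * x^n) sums (M * (M + 1) * (x / sin x) ^ (m + 2))"
      by (simp only: ode)
    have "(\<lambda>n. x_over_sin_coeff (m + 2) n * x^n) sums ((x / sin x) ^ (m + 2))"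
      using x by (intro x_over_sin_coeff_sums) auto
    from sums_mult[OF this, of "M * (M + 1)"]
    show "(\<lambda>n. M * (M + 1) * x_over_sin_coeff (m + 2) n * x^n)
        sums (M * (M + 1) * (x / sin x) ^ (m + 2))"
      by (simp only: mult.assoc)
  qed
  from fun_cong[OF this, of j] \<open>2 \<le> j\<close> show ?thesis
    by (simp add: b_def a_def M_def algebra_simps)
qed

theorem mainTheorem7:
  fixes n k :: nat
  assumes "n \<ge> 1"
  shows "cosec_num (2 * real n + 2) (k + 1) =
    ((2 * real k + 2 - 2 * real n) * (2 * real k + 1 - 2 * real n)) / (2 * real n * (2 * real n + 1))
      * cosec_num (2 * real n) (k + 1)
    + (2 * real n) / (2 * real n + 1) * cosec_num (2 * real n) k"
proof -
  let ?m = "2 * real n" and ?A = "(2 * real k + 2 - 2 * real n) * (2 * real k + 1 - 2 * real n)"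
  have "cosec_num (?m + 2) (k + 1) = x_over_sin_coeff (2 * n + 2) (2 * (k + 1))"
    using cosec_num_eq_x_over_sin_coeff[of "2 * n + 2"] by (simp add: algebra_simps)
  moreover have "cosec_num ?m i = x_over_sin_coeff (2 * n) (2 * i)" for i
    using cosec_num_eq_x_over_sin_coeff[of "2 * n"] by simp
  ultimately have rec: "?m * (?m + 1) * cosec_num (?m + 2) (k + 1)
      = ?A * cosec_num ?m (k + 1) + ?m^2 * cosec_num ?m k"
    using x_over_sin_coeff_recurrence[of "2 * n" "2 * (k + 1)"] assms by (simp add: algebra_simps)
  have "?m > 0"
    using assms by simp
  with rec have "cosec_num (?m + 2) (k + 1)
      = (?A * cosec_num ?m (k + 1) + ?m^2 * cosec_num ?m k) / (?m * (?m + 1))"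
    by (simp add: eq_divide_eq ac_simps)
  also have "\<dots> = ?A / (?m * (?m + 1)) * cosec_num ?m (k + 1)
      + ?m^2 / (?m * (?m + 1)) * cosec_num ?m k"
    by (simp add: add_divide_distrib)
  also have "?m^2 / (?m * (?m + 1)) = ?m / (?m + 1)"
    unfolding power2_eq_square using \<open>?m > 0\<close> by (intro mult_divide_mult_cancel_left) simp
  finally show ?thesis .
qed

end
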